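(* Let $\mathcal{H}_{1}$, $\mathcal{H}_{2}$ and $\mathcal{G}$ be three pdCGs such that both $\mathcal{H}_{1}$ and $\mathcal{H}_{2}$ are covered by $\mathcal{G}$ in the model inclusion order or, equivalently, such that $\mathcal{P}(\mathcal{H}_{1})$ and $\mathcal{P}(\mathcal{H}_{2})$ are two neighbouring submodels of $\mathcal{P}(\mathcal{G})$. Then $\mathcal{H}_{1}\preceq_{t}\mathcal{H}_{2}$ if and only if, for a given edge $(i,j)\in\mathbb{E}_{\mathcal{G}}$, $\mathcal{H}_{2}=(V, E_{\mathcal{G}}, \mathbb{L}_{\mathcal{G}}, \mathbb{E}_{\mathcal{G}}\setminus \{(i,j)\})$ and $\mathcal{H}_{1}$ is either $(V, E_{\mathcal{G}}\setminus\{(i,j)\}, \mathbb{L}_{\mathcal{G}}, \mathbb{E}_{\mathcal{G}} \setminus \{(i,j)\})$ or $(V, E_{\mathcal{G}}\setminus\{\tau(i,j)\}, \mathbb{L}_{\mathcal{G}}, \mathbb{E}_{\mathcal{G}} \setminus \{(i,j)\})$. Moreover, in the latter case $\mathcal{H}_{1}$ is covered by $\mathcal{H}_{2}$ in the twin order ($\mathcal{H}_{1}\prec_t\mathcal{H}_{2}$ with no $\mathcal F\in\mathcal P$ such that $\mathcal{H}_{1}\prec_t\mathcal F\prec_t\mathcal{H}_{2}$), whereas in all other cases $\mathcal{H}_{1}$ and $\mathcal{H}_{2}$ are $\preceq_{t}$-incomparable.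
   Context: Let $V=\{1,\dots,p\}$ and let $\tau$ be a twin-pairing function on $V$, i.e. $\tau(i)\in V$ with $\tau(\tau(i))=i$ and $\tau(i)\neq i$; it is extended to edges by $\tau(i,j)=(\tau(i),\tau(j))$ (endpoints reordered so the smaller comes first) and to sets elementwise. Fix a partition $(L,R)$ of $V$ with $\tau(L)=R$, numbered so that $L=\{1,\dots,q\}$, $R=\{q+1,\dots,p\}$. Let $F_V=\{(i,j): i,j\in V, i<j\}$, $F_L=\{(i,j)\in F_V: i<\tau(j)\}$, $F_R=\{(i,j)\in F_V: i>\tau(j)\}$. A coloured graph $\mathcal G=(\mathcal V,\mathcal E)$ consists of a partition $\mathcal V$ of $V$ into vertex colour classes and a partition $\mathcal E$ of an edge set $E\subseteq F_V$ into edge colour classes. It is a coloured graph for paired data (pdCG) if every colour class is either atomic (a single element) or twin-pairing (of the form $\{i,\tau(i)\}$ or $\{(i,j),\tau(i,j)\}$ with $(i,j)\neq\tau(i,j)$). The associated RCON model for paired data $\mathcal{P}(\mathcal G)$ is the family of Gaussian distributions whose concentration matrix has zero entries for missing edges and equal entries for vertices or edges in the same colour class; $\mathcal{P}$ denotes the family of all pdCGs on $V$. Every pdCG is equivalently represented by the quadruplet $(V,E,\mathbb L,\mathbb E)$ where $E$ is the union of the edge colour classes, $E_L=E\cap F_L$, $E_R=E\cap F_R$, $\mathbb L=\{i\in L:\{i\}\in\mathcal V\}$ and $\mathbb E=\{(i,j)\in E_L\cap\tau(E_R): \{(i,j)\}\in\mathcal E\}$. The model inclusion order is $\mathcal H\preceq_s\mathcal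 G$ iff $\mathcal P(\mathcal H)\subseteq\mathcal P(\mathcal G)$, which holds iff the edge set of $\mathcal H$ is contained in that of $\mathcal G$ and every vertex (resp. edge) colour class of $\mathcal H$ is a union of vertex (resp. edge) colour classes of $\mathcal G$; $\mathcal H$ is covered by $\mathcal G$ in this order if $\mathcal H\prec_s\mathcal G$ and no $\mathcal F\in\mathcal P$ satisfies $\mathcal H\prec_s\mathcal F\prec_s\mathcal G$. The twin order is $\mathcal H\preceq_t\mathcal G$ iff $E_{\mathcal H}\subseteq E_{\mathcal G}$, $\mathbb L_{\mathcal H}\subseteq\mathbb L_{\mathcal G}$ and $\mathbb E_{\mathcal H}\subseteq\mathbb E_{\mathcal G}$. The graphs covered by $\mathcal G$ in the model inclusion order are exactly: (i) $(V,E_{\mathcal G},\mathbb L_{\mathcal G}\setminus\{i\},\mathbb E_{\mathcal G})$, $i\in\mathbb L_{\mathcal G}$; (ii) $(V,E_{\mathcal G},\mathbb L_{\mathcal G},\mathbb E_{\mathcal G}\setminus\{(i,j)\})$, $(i,j)\in\mathbb E_{\mathcal G}$; (iii) $(V,E_{\mathcal G}\setminus\{(i,j)\},\mathbb L_{\mathcal G},\mathbb E_{\mathcal G}\setminus\{(i,j)\})$, $(i,j)\in\mathbb E_{\mathcal G}$; (iv) $(V,E_{\mathcal G}\setminus\{\tau(i,j)\},\mathbb L_{\mathcal G},\mathbb E_{\mathcal G}\setminus\{(i,j)\})$, $(i,j)\in\mathbb E_{\mathcal G}$; (v) $(V,E_{\mathcal G}\setminus\{(i,j)\},\mathbb L_{\mathcal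 G},\mathbb E_{\mathcal G})$ for $(i,j)\in E_{\mathcal G}$ with $\tau(i,j)\notin E_{\mathcal G}$; (vi) $(V,E_{\mathcal G}\setminus\{(i,\tau(i))\},\mathbb L_{\mathcal G},\mathbb E_{\mathcal G})$ for $(i,\tau(i))\in E_{\mathcal G}$; (vii) $(V,E_{\mathcal G}\setminus\{(i,j),\tau(i,j)\},\mathbb L_{\mathcal G},\mathbb E_{\mathcal G})$ for $(i,j),\tau(i,j)\in E_{\mathcal G}$, $(i,j)\neq\tau(i,j)$, $(i,j),\tau(i,j)\notin\mathbb E_{\mathcal G}$. *)

theory Defs
  imports Main
begin

text \<open>Vertices are natural numbers, V = {1..p}; edges are pairs (i,j) with i < j.
  A coloured graph is a pair (vertex colour classes, edge colour classes).\<close>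

type_synonym edge = "nat \<times> nat"
type_synonym cgraph = "nat set set \<times> edge set set"

definition Vset :: "nat \<Rightarrow> nat set" where
  "Vset p = {1..p}"

definition twin_pairing :: "nat \<Rightarrow> (nat \<Rightarrow> nat) \<Rightarrow> bool" where
  "twin_pairing p \<tau> \<longleftrightarrow> (\<forall>i\<in>Vset p. \<tau> i \<in> Vset p \<and> \<tau> (\<tau> i) = i \<and> \<tau> i \<noteq> i)"

definition tau_e :: "(nat \<Rightarrow> nat) \<Rightarrow> edge \<Rightarrow> edge" where
  "tau_e \<tau> e = (min (\<tau> (fst e)) (\<tau> (snd e)), max (\<tau> (fst e)) (\<tau> (snd e)))"

definition F_V :: "nat \<Rightarrow> edge set" where
  "F_V p = {(i, j). i \<in> Vset p \<and> j \<in> Vset p \<and> i < j}"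

definition F_L :: "nat \<Rightarrow> (nat \<Rightarrow> nat) \<Rightarrow> edge set" where
  "F_L p \<tau> = {(i, j) \<in> F_V p. i < \<tau> j}"

definition F_R :: "nat \<Rightarrow> (nat \<Rightarrow> nat) \<Rightarrow> edge set" where
  "F_R p \<tau> = {(i, j) \<in> F_V p. i > \<tau> j}"

definition is_partition :: "'a set set \<Rightarrow> 'a set \<Rightarrow> bool" where
  "is_partition P A \<longleftrightarrow> {} \<notin> P \<and> \<Union>P = A \<and>
     (\<forall>X\<in>P. \<forall>Y\<in>P. X \<noteq> Y \<longrightarrow> X \<inter> Y = {})"

definition vclasses :: "cgraph \<Rightarrow> nat set set" where
  "vclasses G = fst G"

definition eclasses :: "cgraph \<Rightarrow> edge set set" where
  "eclasses G = snd G"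

definition edges :: "cgraph \<Rightarrow> edge set" where
  "edges G = \<Union>(eclasses G)"

definition coloured_graph :: "nat \<Rightarrow> cgraph \<Rightarrow> bool" where
  "coloured_graph p G \<longleftrightarrow> is_partition (vclasses G) (Vset p) \<and>
     is_partition (eclasses G) (edges G) \<and> edges G \<subseteq> F_V p"

definition pdCG :: "nat \<Rightarrow> (nat \<Rightarrow> nat) \<Rightarrow> cgraph \<Rightarrow> bool" where
  "pdCG p \<tau> G \<longleftrightarrow> coloured_graph p G \<and>
     (\<forall>C\<in>vclasses G. (\<exists>i. C = {i}) \<or> (\<exists>i. C = {i, \<tau> i})) \<and>
     (\<forall>C\<in>eclasses G. (\<exists>e. C = {e}) \<or> (\<exists>e. C = {e, tau_e \<tau> e} \<and> e \<noteq> tau_e \<tau> e))"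

text \<open>Quadruplet representation (V, E, LL, EE); L = {1..q}.\<close>
definition LL :: "nat \<Rightarrow> cgraph \<Rightarrow> nat set" where
  "LL q G = {i \<in> {1..q}. {i} \<in> vclasses G}"

definition EE :: "nat \<Rightarrow> (nat \<Rightarrow> nat) \<Rightarrow> cgraph \<Rightarrow> edge set" where
  "EE p \<tau> G = {e \<in> (edges G \<inter> F_L p \<tau>) \<inter> tau_e \<tau> ` (edges G \<inter> F_R p \<tau>).
                 {e} \<in> eclasses G}"

definition quad :: "nat \<Rightarrow> nat \<Rightarrow> (nat \<Rightarrow> nat) \<Rightarrow> cgraph \<Rightarrow> edge set \<times> nat set \<times> edge set" where
  "quad p q \<tau> G = (edges G, LL q G, EE p \<tau> G)"

text \<open>Model inclusion order (combinatorial characterisation of P(H) \<subseteq> P(G)).\<close>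
definition model_le :: "cgraph \<Rightarrow> cgraph \<Rightarrow> bool" where
  "model_le H G \<longleftrightarrow> edges H \<subseteq> edges G \<and>
     (\<forall>C\<in>vclasses H. \<exists>S\<subseteq>vclasses G. C = \<Union>S) \<and>
     (\<forall>C\<in>eclasses H. \<exists>S\<subseteq>eclasses G. C = \<Union>S)"

definition model_less :: "cgraph \<Rightarrow> cgraph \<Rightarrow> bool" where
  "model_less H G \<longleftrightarrow> model_le H G \<and> H \<noteq> G"

definition covered_s :: "nat \<Rightarrow> (nat \<Rightarrow> nat) \<Rightarrow> cgraph \<Rightarrow> cgraph \<Rightarrow> bool" where
  "covered_s p \<tau> H G \<longleftrightarrow> pdCG p \<tau> H \<and> pdCG p \<tau> G \<and> model_less H G \<and>
     \<not> (\<exists>F. pdCG p \<tau> F \<and> model_less H F \<and> model_less F G)"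

definition twin_le :: "nat \<Rightarrow> nat \<Rightarrow> (nat \<Rightarrow> nat) \<Rightarrow> cgraph \<Rightarrow> cgraph \<Rightarrow> bool" where
  "twin_le p q \<tau> H G \<longleftrightarrow> edges H \<subseteq> edges G \<and> LL q H \<subseteq> LL q G \<and> EE p \<tau> H \<subseteq> EE p \<tau> G"

definition twin_less :: "nat \<Rightarrow> nat \<Rightarrow> (nat \<Rightarrow> nat) \<Rightarrow> cgraph \<Rightarrow> cgraph \<Rightarrow> bool" where
  "twin_less p q \<tau> H G \<longleftrightarrow> twin_le p q \<tau> H G \<and> H \<noteq> G"

definition covered_t :: "nat \<Rightarrow> nat \<Rightarrow> (nat \<Rightarrow> nat) \<Rightarrow> cgraph \<Rightarrow> cgraph \<Rightarrow> bool" where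
  "covered_t p q \<tau> H G \<longleftrightarrow> pdCG p \<tau> H \<and> pdCG p \<tau> G \<and> twin_less p q \<tau> H G \<and>
     \<not> (\<exists>F. pdCG p \<tau> F \<and> twin_less p q \<tau> H F \<and> twin_less p q \<tau> F G)"

definition twin_config :: "nat \<Rightarrow> nat \<Rightarrow> (nat \<Rightarrow> nat) \<Rightarrow> cgraph \<Rightarrow> cgraph \<Rightarrow> cgraph \<Rightarrow> bool" where
  "twin_config p q \<tau> G H1 H2 \<longleftrightarrow> (\<exists>e\<in>EE p \<tau> G.
     quad p q \<tau> H2 = (edges G, LL q G, EE p \<tau> G - {e}) \<and>
     (quad p q \<tau> H1 = (edges G - {e}, LL q G, EE p \<tau> G - {e}) \<or>
      quad p q \<tau> H1 = (edges G - {tau_e \<tau> e}, LL q G, EE p \<tau> G - {e})))"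

end

(*
  A pdCG is determined by its edge set together with its sets of atomic vertices and atomic
  edges, since a partition into singletons and twin pairs is recovered from its singletons. In
  these coordinates the model inclusion order is componentwise inclusion, so a cover H of G
  differs from G by one elementary step. Two of these steps matter: if an atomic edge x of G is
  not an edge of H, then H is G with x deleted; if x is still an edge of H but no longer atomic,
  then H is G with the atomic twin pair {x, tau x} merged into one colour class.

  Distinct covers of G are incomparable in the model order. Comparability in the twin order
  implies comparability in the model order except when an atomic edge e of H1, whose twin is
  missing from H1, is a non-atomic edge of H2 whose twin is present there. Hence if H1 is below
  H2 in the twin order, H2 merges {e, tau e} and H1 deletes tau e, which is the configuration of
  the corollary. In that configuration H1 and H2 have the same LL and EE and differ in a single
  edge, so nothing lies strictly between them in the twin order.
*)

theory Submission
  imports Defs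
begin

section \<open>Partitions into singletons and twin pairs\<close>

definition twin_classes :: "('a \<Rightarrow> 'a) \<Rightarrow> 'a set set \<Rightarrow> bool" where
  "twin_classes \<sigma> P \<longleftrightarrow> (\<forall>C\<in>P. (\<exists>x. C = {x}) \<or> (\<exists>x. C = {x, \<sigma> x} \<and> x \<noteq> \<sigma> x))"

definition atoms :: "'a set set \<Rightarrow> 'a set" where
  "atoms P = {x. {x} \<in> P}"

definition twin_partition :: "('a \<Rightarrow> 'a) \<Rightarrow> 'a set \<Rightarrow> 'a set \<Rightarrow> 'a set set" where
  "twin_partition \<sigma> S X = (\<lambda>x. {x}) ` S \<union> (\<lambda>x. {x, \<sigma> x}) ` (X - S)"

(* For an involution on X: the possible sets of singleton classes of a partition of X into twin classes. *)
definition admissible_atoms :: "('a \<Rightarrow> 'a) \<Rightarrow> 'a set \<Rightarrow> 'a set \<Rightarrow> bool" where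
  "admissible_atoms \<sigma> X S \<longleftrightarrow> S \<subseteq> X \<and> (\<forall>x\<in>S. \<sigma> x \<in> X \<longrightarrow> \<sigma> x \<in> S) \<and>
     (\<forall>x\<in>X. \<sigma> x = x \<or> \<sigma> x \<notin> X \<longrightarrow> x \<in> S)"

lemma twin_pair_eq: "\<sigma> (\<sigma> y) = y \<Longrightarrow> z \<in> {y, \<sigma> y} \<Longrightarrow> {z, \<sigma> z} = {y, \<sigma> y}"
  by auto

lemma partition_block_eq:
  "is_partition P X \<Longrightarrow> C \<in> P \<Longrightarrow> D \<in> P \<Longrightarrow> x \<in> C \<Longrightarrow> x \<in> D \<Longrightarrow> C = D"
  unfolding is_partition_def by blast

lemma twin_block_eq:
  assumes P: "is_partition P X" "twin_classes \<sigma> P" and inv: "\<And>y. y \<in> X \<Longrightarrow> \<sigma> (\<sigma> y) = y"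
    and C: "C \<in> P" "x \<in> C"
  shows "C = (if x \<in> atoms P then {x} else {x, \<sigma> x})"
proof -
  have CX: "C \<subseteq> X" using P(1) C(1) by (auto simp: is_partition_def)
  consider y where "C = {y}" | y where "C = {y, \<sigma> y}" "y \<noteq> \<sigma> y"
    using P(2) C(1) unfolding twin_classes_def by blast
  then show ?thesis
  proof cases
    case 1
    then have "C = {x}" using C(2) by simp
    then show ?thesis using C(1) by (simp add: atoms_def)
  next
    case (2 y)
    have "{x} \<notin> P"
    proof
      assume "{x} \<in> P"
      then have "{x} = C" using partition_block_eq[OF P(1)] C by blast
      then show False using 2 by auto
    qed
    moreover have "C = {x, \<sigma> x}" using twin_pair_eq[of \<sigma> y x] inv CX C 2 by auto
    ultimately show ?thesis by (simp add: atoms_def)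
  qed
qed

lemma partition_blockE:
  assumes "is_partition P X" "x \<in> X"
  obtains C where "C \<in> P" "x \<in> C"
  using assms unfolding is_partition_def by blast

lemma
  assumes P: "is_partition P X" "twin_classes \<sigma> P" and inv: "\<And>x. x \<in> X \<Longrightarrow> \<sigma> (\<sigma> x) = x"
  shows admissible_atoms_partition: "admissible_atoms \<sigma> X (atoms P)"
    and twin_partition_atoms: "twin_partition \<sigma> (atoms P) X = P"
proof -
  have block: "C = (if x \<in> atoms P then {x} else {x, \<sigma> x})" if "C \<in> P" "x \<in> C" for C x
    using twin_block_eq[OF P inv that] .
  have CX: "C \<subseteq> X" if "C \<in> P" for C
    using P(1) that by (auto simp: is_partition_def)
  have atoms_X: "atoms P \<subseteq> X"
    using CX by (auto simp: atoms_def)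
  have twin: "\<sigma> x \<in> X \<and> \<sigma> x \<noteq> x" if x: "x \<in> X" "x \<notin> atoms P" for x
  proof -
    obtain C where C: "C \<in> P" "x \<in> C" using partition_blockE[OF P(1) x(1)] .
    then have "C = {x, \<sigma> x}" using block[OF C] x(2) by simp
    then show ?thesis using CX[OF C(1)] C(1) x(2) by (auto simp: atoms_def)
  qed
  have closed: "\<sigma> x \<in> atoms P" if x: "x \<in> atoms P" "\<sigma> x \<in> X" for x
  proof (rule ccontr)
    assume "\<sigma> x \<notin> atoms P"
    obtain C where C: "C \<in> P" "\<sigma> x \<in> C" using partition_blockE[OF P(1) x(2)] .
    have "C = {\<sigma> x, \<sigma> (\<sigma> x)}" using block[OF C] \<open>\<sigma> x \<notin> atoms P\<close> by simp
    then have "C = {\<sigma> x, x}" using inv atoms_X x(1) by auto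
    moreover have "{x} \<in> P" using x(1) by (simp add: atoms_def)
    ultimately have "C = {x}" using partition_block_eq[OF P(1) C(1)] by blast
    then show False using \<open>C = {\<sigma> x, x}\<close> \<open>\<sigma> x \<notin> atoms P\<close> x(1) by auto
  qed
  show "admissible_atoms \<sigma> X (atoms P)"
    unfolding admissible_atoms_def using atoms_X closed twin by blast
  show "twin_partition \<sigma> (atoms P) X = P"
  proof
    show "twin_partition \<sigma> (atoms P) X \<subseteq> P"
    proof
      fix C assume "C \<in> twin_partition \<sigma> (atoms P) X"
      then consider x where "x \<in> atoms P" "C = {x}" | x where "x \<in> X - atoms P" "C = {x, \<sigma> x}"
        unfolding twin_partition_def by blast
      then show "C \<in> P"
      proof cases
        case 1
        then show ?thesis by (simp add: atoms_def)
      next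
        case (2 x)
        obtain D where D: "D \<in> P" "x \<in> D" using partition_blockE[OF P(1)] 2 by blast
        then show ?thesis using block[OF D] 2 by auto
      qed
    qed
  next
    show "P \<subseteq> twin_partition \<sigma> (atoms P) X"
    proof
      fix C assume C: "C \<in> P"
      have "C \<noteq> {}" using P(1) C by (auto simp: is_partition_def)
      then obtain x where x: "x \<in> C" by blast
      have "x \<in> X" using CX C x by blast
      show "C \<in> twin_partition \<sigma> (atoms P) X"
      proof (cases "x \<in> atoms P")
        case True
        then show ?thesis using block[OF C x] unfolding twin_partition_def by simp
      next
        case False
        then show ?thesis using block[OF C x] \<open>x \<in> X\<close> unfolding twin_partition_def by simp
      qed
    qed
  qed
qed

lemma
  assumes S: "admissible_atoms \<sigma> X S" and inv: "\<And>x. x \<in> X \<Longrightarrow> \<sigma> (\<sigma> x) = x"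
  shows is_partition_twin_partition: "is_partition (twin_partition \<sigma> S X) X"
    and twin_classes_twin_partition: "twin_classes \<sigma> (twin_partition \<sigma> S X)"
    and atoms_twin_partition: "atoms (twin_partition \<sigma> S X) = S"
proof -
  have SX: "S \<subseteq> X" and closed: "\<And>x. x \<in> S \<Longrightarrow> \<sigma> x \<in> X \<Longrightarrow> \<sigma> x \<in> S"
    and twin: "\<And>x. x \<in> X \<Longrightarrow> x \<notin> S \<Longrightarrow> \<sigma> x \<noteq> x \<and> \<sigma> x \<in> X"
    using S unfolding admissible_atoms_def by blast+
  have atom_not_twin: "x \<notin> {y, \<sigma> y}" if "x \<in> S" "y \<in> X - S" for x y
  proof
    assume "x \<in> {y, \<sigma> y}"
    then have "x = \<sigma> y" using that by auto
    then have "y \<in> S" using closed[OF that(1)] inv that(2) by simp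
    then show False using that(2) by simp
  qed
  have union: "\<Union>(twin_partition \<sigma> S X) = X"
  proof
    show "\<Union>(twin_partition \<sigma> S X) \<subseteq> X"
      using SX twin by (auto simp: twin_partition_def)
    show "X \<subseteq> \<Union>(twin_partition \<sigma> S X)"
      unfolding twin_partition_def by fastforce
  qed
  have block: "C = (if z \<in> S then {z} else {z, \<sigma> z})"
    if C: "C \<in> twin_partition \<sigma> S X" and z: "z \<in> C" for C z
  proof -
    consider x where "x \<in> S" "C = {x}" | y where "y \<in> X - S" "C = {y, \<sigma> y}"
      using C unfolding twin_partition_def by blast
    then show ?thesis
    proof cases
      case (2 y)
      then have "z \<notin> S" using atom_not_twin z by blast
      then show ?thesis using twin_pair_eq[of \<sigma> y z] inv 2 z by simp
    qed (use z in simp)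
  qed
  have disjoint: "C \<inter> D = {}"
    if "C \<in> twin_partition \<sigma> S X" "D \<in> twin_partition \<sigma> S X" "C \<noteq> D" for C D
    using block[OF that(1)] block[OF that(2)] that(3) by blast
  show "is_partition (twin_partition \<sigma> S X) X"
    unfolding is_partition_def using union disjoint by (auto simp: twin_partition_def)
  show "twin_classes \<sigma> (twin_partition \<sigma> S X)"
    unfolding twin_classes_def twin_partition_def using twin by blast
  show "atoms (twin_partition \<sigma> S X) = S"
  proof
    show "S \<subseteq> atoms (twin_partition \<sigma> S X)"
      by (auto simp: atoms_def twin_partition_def)
    show "atoms (twin_partition \<sigma> S X) \<subseteq> S"
      using twin by (auto simp: atoms_def twin_partition_def doubleton_eq_iff)
  qed
qed

lemma refines_iff_atoms_subset:
  assumes P: "is_partition P X" "twin_classes \<sigma> P" and Q: "is_partition Q Y" "twin_classes \<sigma> Q"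
    and XY: "X \<subseteq> Y" and inv: "\<And>y. y \<in> Y \<Longrightarrow> \<sigma> (\<sigma> y) = y"
  shows "(\<forall>C\<in>P. \<exists>T\<subseteq>Q. C = \<Union>T) \<longleftrightarrow> atoms P \<subseteq> atoms Q"
proof
  assume refines: "\<forall>C\<in>P. \<exists>T\<subseteq>Q. C = \<Union>T"
  show "atoms P \<subseteq> atoms Q"
  proof
    fix x assume "x \<in> atoms P"
    then obtain T where T: "T \<subseteq> Q" "{x} = \<Union>T" using refines by (auto simp: atoms_def)
    then obtain D where "D \<in> T" "x \<in> D" by blast
    then have "D = {x}" using T(2) by blast
    then show "x \<in> atoms Q" using T(1) \<open>D \<in> T\<close> by (auto simp: atoms_def)
  qed
next
  assume sub: "atoms P \<subseteq> atoms Q"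
  have invX: "\<And>x. x \<in> X \<Longrightarrow> \<sigma> (\<sigma> x) = x" using inv XY by blast
  note admP = admissible_atoms_partition[OF P invX] and admQ = admissible_atoms_partition[OF Q inv]
  show "\<forall>C\<in>P. \<exists>T\<subseteq>Q. C = \<Union>T"
  proof
    fix C assume C: "C \<in> P"
    have "C \<noteq> {}" using P(1) C by (auto simp: is_partition_def)
    then obtain x where x: "x \<in> C" by blast
    have "x \<in> X" using P(1) C x by (auto simp: is_partition_def)
    show "\<exists>T\<subseteq>Q. C = \<Union>T"
    proof (cases "x \<in> atoms P")
      case True
      then have "C = {x}" "{x} \<in> Q"
        using twin_block_eq[OF P invX C x] sub by (auto simp: atoms_def)
      then show ?thesis by (intro exI[of _ "{{x}}"]) auto
    next
      case False
      then have Cx: "C = {x, \<sigma> x}" and "\<sigma> x \<in> X"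
        using twin_block_eq[OF P invX C x] admP \<open>x \<in> X\<close> by (auto simp: admissible_atoms_def)
      show ?thesis
      proof (cases "x \<in> atoms Q")
        case True
        then have "\<sigma> x \<in> atoms Q" using admQ \<open>\<sigma> x \<in> X\<close> XY by (auto simp: admissible_atoms_def)
        then show ?thesis using True Cx by (intro exI[of _ "{{x}, {\<sigma> x}}"]) (auto simp: atoms_def)
      next
        case False
        obtain D where D: "D \<in> Q" "x \<in> D" using partition_blockE[OF Q(1)] \<open>x \<in> X\<close> XY by blast
        then have "D = C" using twin_block_eq[OF Q inv D] False Cx by simp
        then show ?thesis using D(1) by (intro exI[of _ "{D}"]) auto
      qed
    qed
  qed
qed

lemma admissible_atoms_non_atom:
  assumes S: "admissible_atoms \<sigma> X S" and x: "x \<in> X" "x \<notin> S"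
    and inv: "\<And>y. y \<in> X \<Longrightarrow> \<sigma> (\<sigma> y) = y"
  shows "\<sigma> x \<in> X" "\<sigma> x \<noteq> x" "\<sigma> x \<notin> S"
proof -
  show "\<sigma> x \<in> X" "\<sigma> x \<noteq> x" using S x unfolding admissible_atoms_def by blast+
  show "\<sigma> x \<notin> S"
  proof
    assume "\<sigma> x \<in> S"
    moreover have "\<sigma> (\<sigma> x) \<in> X" using inv x(1) by simp
    ultimately have "\<sigma> (\<sigma> x) \<in> S" using S unfolding admissible_atoms_def by blast
    then show False using x inv by simp
  qed
qed

lemma admissible_atoms_Diff_twins:
  assumes S: "admissible_atoms \<sigma> X S" and x: "x \<in> S" "\<sigma> x \<in> X" "\<sigma> x \<noteq> x"
    and inv: "\<And>y. y \<in> X \<Longrightarrow> \<sigma> (\<sigma> y) = y"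
  shows "admissible_atoms \<sigma> X (S - {x, \<sigma> x})"
proof -
  have "x \<in> X" using S x(1) by (auto simp: admissible_atoms_def)
  then have "\<sigma> y \<notin> {x, \<sigma> x}" if "y \<in> X - {x, \<sigma> x}" for y
    using inv[of y] inv[of x] that by auto
  then show ?thesis using S x(2,3) inv \<open>x \<in> X\<close> unfolding admissible_atoms_def by auto
qed

lemma admissible_atoms_Diff_atom:
  assumes S: "admissible_atoms \<sigma> X S" and x: "x \<in> S" and inv: "\<And>y. y \<in> X \<Longrightarrow> \<sigma> (\<sigma> y) = y"
  shows "admissible_atoms \<sigma> (X - {x}) (S - {x})"
proof -
  have "y \<in> S" if "y \<in> X" "\<sigma> y = x" for y
    using S x inv[of y] that unfolding admissible_atoms_def by auto
  then show ?thesis using S unfolding admissible_atoms_def by auto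
qed

section \<open>Twin pairings of vertices and edges\<close>

locale paired_data =
  fixes p q :: nat and \<tau> :: "nat \<Rightarrow> nat"
  assumes pairing: "twin_pairing p \<tau>"
    and tau_L_eq_R: "\<tau> ` {1..q} = {q+1..p}"
begin

lemma tau_Vset: "i \<in> Vset p \<Longrightarrow> \<tau> i \<in> Vset p"
  and tau_tau: "i \<in> Vset p \<Longrightarrow> \<tau> (\<tau> i) = i"
  and tau_neq: "i \<in> Vset p \<Longrightarrow> \<tau> i \<noteq> i"
  using pairing by (auto simp: twin_pairing_def)

lemma q_le_p: "q \<le> p"
proof (rule ccontr)
  assume "\<not> q \<le> p"
  then have "\<tau> ` {1..q} = {}" using tau_L_eq_R by simp
  then show False using \<open>\<not> q \<le> p\<close> by simp
qed

lemma tau_le_q_iff: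
  assumes "i \<in> Vset p"
  shows "\<tau> i \<le> q \<longleftrightarrow> q < i"
proof
  assume "\<tau> i \<le> q"
  show "q < i"
  proof (rule ccontr)
    assume "\<not> q < i"
    then have "\<tau> i \<in> {q+1..p}" using assms tau_L_eq_R by (auto simp: Vset_def)
    then show False using \<open>\<tau> i \<le> q\<close> by simp
  qed
next
  assume "q < i"
  then have "i \<in> \<tau> ` {1..q}" using assms tau_L_eq_R by (simp add: Vset_def)
  then obtain m where "m \<in> {1..q}" "i = \<tau> m" by blast
  then show "\<tau> i \<le> q" using tau_tau[of m] q_le_p by (simp add: Vset_def)
qed

lemma F_V_tau_neq: "(i, j) \<in> F_V p \<Longrightarrow> \<tau> i \<noteq> \<tau> j"
  using tau_tau[of i] tau_tau[of j] by (auto simp: F_V_def)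

lemma tau_e_F_V: "e \<in> F_V p \<Longrightarrow> tau_e \<tau> e \<in> F_V p"
  using tau_Vset F_V_tau_neq by (fastforce simp: F_V_def tau_e_def min_def max_def)

lemma tau_e_tau_e: "e \<in> F_V p \<Longrightarrow> tau_e \<tau> (tau_e \<tau> e) = e"
  using tau_tau F_V_tau_neq by (fastforce simp: F_V_def tau_e_def min_def max_def)

lemma tau_e_F_L:
  assumes "e \<in> F_L p \<tau>"
  shows "tau_e \<tau> e \<in> F_R p \<tau>"
proof -
  obtain i j where e: "e = (i, j)" "i \<in> Vset p" "j \<in> Vset p" "i < j" "i < \<tau> j"
    using assms by (auto simp: F_L_def F_V_def)
  have "\<tau> i \<le> q \<longleftrightarrow> q < i" "\<tau> j \<le> q \<longleftrightarrow> q < j" "\<tau> (\<tau> i) = i" "\<tau> (\<tau> j) = j"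
    using e tau_le_q_iff tau_tau by auto
  then show ?thesis using e tau_e_F_V[of e] assms
    by (auto simp: F_L_def F_R_def tau_e_def min_def max_def)
qed

lemma tau_e_F_R:
  assumes "e \<in> F_R p \<tau>"
  shows "tau_e \<tau> e \<in> F_L p \<tau>"
proof -
  obtain i j where e: "e = (i, j)" "i \<in> Vset p" "j \<in> Vset p" "i < j" "\<tau> j < i"
    using assms by (auto simp: F_R_def F_V_def)
  have "\<tau> i \<le> q \<longleftrightarrow> q < i" "\<tau> j \<le> q \<longleftrightarrow> q < j" "\<tau> (\<tau> i) = i" "\<tau> (\<tau> j) = j"
    using e tau_le_q_iff tau_tau by auto
  then show ?thesis using e tau_e_F_V[of e] assms
    by (auto simp: F_L_def F_R_def tau_e_def min_def max_def)
qed

lemma tau_e_not_F_L: "e \<in> F_L p \<tau> \<Longrightarrow> tau_e \<tau> e \<notin> F_L p \<tau>"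
  using tau_e_F_L[of e] by (cases "tau_e \<tau> e") (auto simp: F_L_def F_R_def)

lemma F_L_or_tau_e_F_L:
  assumes "e \<in> F_V p" "tau_e \<tau> e \<noteq> e"
  shows "e \<in> F_L p \<tau> \<or> tau_e \<tau> e \<in> F_L p \<tau>"
proof -
  obtain i j where e: "e = (i, j)" "i \<in> Vset p" "j \<in> Vset p" "i < j"
    using assms(1) by (auto simp: F_V_def)
  have "i \<noteq> \<tau> j"
    using assms(2) e tau_tau[of j] by (auto simp: tau_e_def min_def max_def)
  then have "e \<in> F_L p \<tau> \<or> e \<in> F_R p \<tau>"
    using assms(1) e by (auto simp: F_L_def F_R_def)
  then show ?thesis using tau_e_F_R by blast
qed

end

section \<open>Coloured graphs for paired data as triples\<close>

definition atomic_vertices :: "cgraph \<Rightarrow> nat set" where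
  "atomic_vertices G = atoms (vclasses G)"

definition atomic_edges :: "cgraph \<Rightarrow> edge set" where
  "atomic_edges G = atoms (eclasses G)"

definition admissible_triple :: "nat \<Rightarrow> (nat \<Rightarrow> nat) \<Rightarrow> nat set \<Rightarrow> edge set \<Rightarrow> edge set \<Rightarrow> bool" where
  "admissible_triple p \<tau> A E S \<longleftrightarrow>
     admissible_atoms \<tau> (Vset p) A \<and> E \<subseteq> F_V p \<and> admissible_atoms (tau_e \<tau>) E S"

definition cgraph_of :: "nat \<Rightarrow> (nat \<Rightarrow> nat) \<Rightarrow> nat set \<Rightarrow> edge set \<Rightarrow> edge set \<Rightarrow> cgraph" where
  "cgraph_of p \<tau> A E S = (twin_partition \<tau> A (Vset p), twin_partition (tau_e \<tau>) S E)"

lemma LL_eq: "LL q G = atomic_vertices G \<inter> {1..q}"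
  by (auto simp: LL_def atomic_vertices_def atoms_def)

context paired_data
begin

lemma pdCG_D:
  assumes "pdCG p \<tau> G"
  shows "is_partition (vclasses G) (Vset p)" "twin_classes \<tau> (vclasses G)"
    and "is_partition (eclasses G) (edges G)" "twin_classes (tau_e \<tau>) (eclasses G)"
    and edges_subset_F_V: "edges G \<subseteq> F_V p"
proof -
  show V: "is_partition (vclasses G) (Vset p)" and "is_partition (eclasses G) (edges G)"
    and "edges G \<subseteq> F_V p"
    using assms by (simp_all add: pdCG_def coloured_graph_def)
  show "twin_classes (tau_e \<tau>) (eclasses G)"
    using assms by (simp add: pdCG_def twin_classes_def)
  show "twin_classes \<tau> (vclasses G)"
    unfolding twin_classes_def
  proof
    fix C assume C: "C \<in> vclasses G"
    then have "(\<exists>i. C = {i}) \<or> (\<exists>i. C = {i, \<tau> i})" using assms by (simp add: pdCG_def)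
    moreover have "C \<subseteq> Vset p" using V C by (auto simp: is_partition_def)
    ultimately show "(\<exists>x. C = {x}) \<or> (\<exists>x. C = {x, \<tau> x} \<and> x \<noteq> \<tau> x)" using tau_neq by blast
  qed
qed

lemma tau_e_tau_e_edges: "pdCG p \<tau> G \<Longrightarrow> e \<in> edges G \<Longrightarrow> tau_e \<tau> (tau_e \<tau> e) = e"
  using edges_subset_F_V tau_e_tau_e by blast

lemma admissible_atomic_vertices:
  assumes "pdCG p \<tau> G"
  shows "admissible_atoms \<tau> (Vset p) (atomic_vertices G)"
  using admissible_atoms_partition[OF pdCG_D(1,2)[OF assms] tau_tau] by (simp add: atomic_vertices_def)

lemma admissible_atomic_edges:
  assumes "pdCG p \<tau> G"
  shows "admissible_atoms (tau_e \<tau>) (edges G) (atomic_edges G)"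
  using admissible_atoms_partition[OF pdCG_D(3,4)[OF assms] tau_e_tau_e_edges[OF assms]]
  by (simp add: atomic_edges_def)

lemma admissible_triple_pdCG:
  "pdCG p \<tau> G \<Longrightarrow> admissible_triple p \<tau> (atomic_vertices G) (edges G) (atomic_edges G)"
  using admissible_atomic_vertices admissible_atomic_edges edges_subset_F_V
  by (simp add: admissible_triple_def)

lemma cgraph_of_pdCG:
  assumes "pdCG p \<tau> G"
  shows "cgraph_of p \<tau> (atomic_vertices G) (edges G) (atomic_edges G) = G"
proof -
  have "twin_partition \<tau> (atomic_vertices G) (Vset p) = vclasses G"
    using twin_partition_atoms[OF pdCG_D(1,2)[OF assms] tau_tau] by (simp add: atomic_vertices_def)
  moreover have "twin_partition (tau_e \<tau>) (atomic_edges G) (edges G) = eclasses G"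
    using twin_partition_atoms[OF pdCG_D(3,4)[OF assms] tau_e_tau_e_edges[OF assms]]
    by (simp add: atomic_edges_def)
  ultimately show ?thesis by (simp add: cgraph_of_def vclasses_def eclasses_def)
qed

lemma
  assumes "admissible_triple p \<tau> A E S"
  shows pdCG_cgraph_of: "pdCG p \<tau> (cgraph_of p \<tau> A E S)"
    and atomic_vertices_cgraph_of: "atomic_vertices (cgraph_of p \<tau> A E S) = A"
    and edges_cgraph_of: "edges (cgraph_of p \<tau> A E S) = E"
    and atomic_edges_cgraph_of: "atomic_edges (cgraph_of p \<tau> A E S) = S"
proof -
  have A: "admissible_atoms \<tau> (Vset p) A" and E: "E \<subseteq> F_V p"
    and S: "admissible_atoms (tau_e \<tau>) E S"
    using assms by (auto simp: admissible_triple_def)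
  have invE: "\<And>e. e \<in> E \<Longrightarrow> tau_e \<tau> (tau_e \<tau> e) = e" using E tau_e_tau_e by blast
  have vc: "vclasses (cgraph_of p \<tau> A E S) = twin_partition \<tau> A (Vset p)"
    and ec: "eclasses (cgraph_of p \<tau> A E S) = twin_partition (tau_e \<tau>) S E"
    by (simp_all add: cgraph_of_def vclasses_def eclasses_def)
  note V = is_partition_twin_partition[OF A tau_tau] twin_classes_twin_partition[OF A tau_tau]
    atoms_twin_partition[OF A tau_tau]
  note P = is_partition_twin_partition[OF S invE] twin_classes_twin_partition[OF S invE]
    atoms_twin_partition[OF S invE]
  show edges: "edges (cgraph_of p \<tau> A E S) = E"
    using P(1) by (simp add: edges_def ec is_partition_def)
  show "atomic_vertices (cgraph_of p \<tau> A E S) = A"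
    using V(3) by (simp add: atomic_vertices_def vc)
  show "atomic_edges (cgraph_of p \<tau> A E S) = S"
    using P(3) by (simp add: atomic_edges_def ec)
  have "\<forall>C\<in>twin_partition \<tau> A (Vset p). (\<exists>i. C = {i}) \<or> (\<exists>i. C = {i, \<tau> i})"
    using V(2) unfolding twin_classes_def by blast
  then show "pdCG p \<tau> (cgraph_of p \<tau> A E S)"
    using V(1) P(1,2) E unfolding pdCG_def coloured_graph_def twin_classes_def vc ec edges
    by simp
qed

lemma pdCG_eqI:
  assumes "pdCG p \<tau> H" "pdCG p \<tau> G" "atomic_vertices H = atomic_vertices G"
    "edges H = edges G" "atomic_edges H = atomic_edges G"
  shows "H = G"
proof -
  have "H = cgraph_of p \<tau> (atomic_vertices H) (edges H) (atomic_edges H)"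
    using cgraph_of_pdCG[OF assms(1)] by simp
  also have "\<dots> = G"
    using assms(3-5) cgraph_of_pdCG[OF assms(2)] by simp
  finally show ?thesis .
qed

lemma model_le_iff:
  assumes H: "pdCG p \<tau> H" and G: "pdCG p \<tau> G"
  shows "model_le H G \<longleftrightarrow>
    atomic_vertices H \<subseteq> atomic_vertices G \<and> edges H \<subseteq> edges G \<and> atomic_edges H \<subseteq> atomic_edges G"
proof -
  note h = pdCG_D[OF H] and g = pdCG_D[OF G]
  have V: "(\<forall>C\<in>vclasses H. \<exists>T\<subseteq>vclasses G. C = \<Union>T) \<longleftrightarrow> atomic_vertices H \<subseteq> atomic_vertices G"
    unfolding atomic_vertices_def
    by (rule refines_iff_atoms_subset[OF h(1,2) g(1,2) order_refl tau_tau])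
  have E: "(\<forall>C\<in>eclasses H. \<exists>T\<subseteq>eclasses G. C = \<Union>T) \<longleftrightarrow> atomic_edges H \<subseteq> atomic_edges G"
    if "edges H \<subseteq> edges G"
    unfolding atomic_edges_def
    by (rule refines_iff_atoms_subset[OF h(3,4) g(3,4) that tau_e_tau_e_edges[OF G]])
  show ?thesis
  proof (cases "edges H \<subseteq> edges G")
    case True
    then show ?thesis using V E[OF True] by (simp add: model_le_def)
  qed (simp add: model_le_def)
qed

section \<open>Covers in the model inclusion order\<close>

lemma covered_s_D:
  assumes "covered_s p \<tau> H G"
  shows "pdCG p \<tau> H" "pdCG p \<tau> G"
    and "atomic_vertices H \<subseteq> atomic_vertices G" "edges H \<subseteq> edges G"
      "atomic_edges H \<subseteq> atomic_edges G"
proof -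
  show H: "pdCG p \<tau> H" and G: "pdCG p \<tau> G"
    using assms by (simp_all add: covered_s_def model_less_def)
  have "model_le H G" using assms by (simp add: covered_s_def model_less_def)
  then show "atomic_vertices H \<subseteq> atomic_vertices G" "edges H \<subseteq> edges G"
      "atomic_edges H \<subseteq> atomic_edges G"
    using model_le_iff[OF H G] by simp_all
qed

lemma covered_s_intermediate_eq:
  assumes c: "covered_s p \<tau> H G" and T: "admissible_triple p \<tau> A E S"
    and "atomic_vertices H \<subseteq> A" "A \<subseteq> atomic_vertices G" "edges H \<subseteq> E" "E \<subseteq> edges G"
      "atomic_edges H \<subseteq> S" "S \<subseteq> atomic_edges G"
    and ne: "(A, E, S) \<noteq> (atomic_vertices G, edges G, atomic_edges G)"
  shows "atomic_vertices H = A \<and> edges H = E \<and> atomic_edges H = S"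
proof -
  note H = covered_s_D(1)[OF c] and G = covered_s_D(2)[OF c]
  define F where "F = cgraph_of p \<tau> A E S"
  have F: "pdCG p \<tau> F" "atomic_vertices F = A" "edges F = E" "atomic_edges F = S"
    unfolding F_def using T by (rule pdCG_cgraph_of atomic_vertices_cgraph_of edges_cgraph_of
      atomic_edges_cgraph_of)+
  have "model_le H F" "model_le F G" using assms model_le_iff[OF H F(1)] model_le_iff[OF F(1) G] F
    by simp_all
  moreover have "F \<noteq> G" using ne F by auto
  ultimately have "H = F"
    using c F(1) unfolding covered_s_def model_less_def by blast
  then show ?thesis using F by simp
qed

lemma covered_s_delete_atomic_edge:
  assumes c: "covered_s p \<tau> H G" and x: "x \<in> atomic_edges G" "x \<notin> edges H"
  shows "atomic_vertices H = atomic_vertices G \<and> edges H = edges G - {x} \<and>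
    atomic_edges H = atomic_edges G - {x}"
proof -
  note H = covered_s_D(1)[OF c] and G = covered_s_D(2)[OF c] and sub = covered_s_D(3-5)[OF c]
  have "atomic_edges H \<subseteq> edges H" using admissible_atomic_edges[OF H] by (simp add: admissible_atoms_def)
  then have "atomic_edges H \<subseteq> atomic_edges G - {x}" using sub(3) x(2) by blast
  moreover have "admissible_triple p \<tau> (atomic_vertices G) (edges G - {x}) (atomic_edges G - {x})"
    using admissible_atoms_Diff_atom[OF admissible_atomic_edges[OF G] x(1) tau_e_tau_e_edges[OF G]]
      admissible_triple_pdCG[OF G] by (auto simp: admissible_triple_def)
  moreover have "x \<in> edges G" using admissible_atomic_edges[OF G] x(1) by (auto simp: admissible_atoms_def)
  ultimately show ?thesis using covered_s_intermediate_eq[OF c] sub x(2) by blast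
qed

lemma covered_s_merge_atomic_twins:
  assumes c: "covered_s p \<tau> H G" and x: "x \<in> atomic_edges G" "x \<notin> atomic_edges H" "x \<in> edges H"
  shows "tau_e \<tau> x \<in> atomic_edges G" "tau_e \<tau> x \<noteq> x"
    and "atomic_vertices H = atomic_vertices G \<and> edges H = edges G \<and>
      atomic_edges H = atomic_edges G - {x, tau_e \<tau> x}"
proof -
  note H = covered_s_D(1)[OF c] and G = covered_s_D(2)[OF c] and sub = covered_s_D(3-5)[OF c]
  note admG = admissible_atomic_edges[OF G]
  note tx = admissible_atoms_non_atom[OF admissible_atomic_edges[OF H] x(3,2) tau_e_tau_e_edges[OF H]]
  show "tau_e \<tau> x \<noteq> x" using tx(2) .
  show "tau_e \<tau> x \<in> atomic_edges G"
    using admG x(1) tx(1) sub(2) by (auto simp: admissible_atoms_def)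
  have "atomic_edges H \<subseteq> atomic_edges G - {x, tau_e \<tau> x}" using sub(3) x(2) tx(3) by blast
  moreover have "admissible_triple p \<tau> (atomic_vertices G) (edges G) (atomic_edges G - {x, tau_e \<tau> x})"
    using admissible_atoms_Diff_twins[OF admG x(1) _ tx(2) tau_e_tau_e_edges[OF G]] tx(1) sub(2)
      admissible_triple_pdCG[OF G] by (auto simp: admissible_triple_def)
  ultimately show "atomic_vertices H = atomic_vertices G \<and> edges H = edges G \<and>
      atomic_edges H = atomic_edges G - {x, tau_e \<tau> x}"
    using covered_s_intermediate_eq[OF c] sub x(1) by blast
qed

section \<open>The twin order\<close>

lemma atomic_vertices_LL:
  assumes G: "pdCG p \<tau> G"
  shows "atomic_vertices G = {i \<in> Vset p. i \<in> LL q G \<or> \<tau> i \<in> LL q G}"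
proof -
  have sub: "atomic_vertices G \<subseteq> Vset p"
    and closed: "\<And>i. i \<in> atomic_vertices G \<Longrightarrow> \<tau> i \<in> atomic_vertices G"
    using admissible_atomic_vertices[OF G] tau_Vset unfolding admissible_atoms_def by blast+
  have "i \<in> atomic_vertices G \<longleftrightarrow> i \<in> LL q G \<or> \<tau> i \<in> LL q G" if i: "i \<in> Vset p" for i
  proof -
    have "i \<le> q \<or> \<tau> i \<le> q" using tau_le_q_iff[OF i] by linarith
    moreover have "1 \<le> i" "1 \<le> \<tau> i" using i tau_Vset[OF i] by (auto simp: Vset_def)
    ultimately show ?thesis using closed[of i] closed[of "\<tau> i"] tau_tau[OF i] by (auto simp: LL_eq)
  qed
  then show ?thesis using sub by blast
qed

lemma EE_eq:
  assumes G: "pdCG p \<tau> G"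
  shows "EE p \<tau> G = {e \<in> edges G \<inter> F_L p \<tau>. tau_e \<tau> e \<in> edges G \<and> e \<in> atomic_edges G}"
proof -
  have "e \<in> tau_e \<tau> ` (edges G \<inter> F_R p \<tau>) \<longleftrightarrow> tau_e \<tau> e \<in> edges G"
    if e: "e \<in> edges G" "e \<in> F_L p \<tau>" for e
    using tau_e_tau_e_edges[OF G] tau_e_F_L[OF e(2)] tau_e_tau_e_edges[OF G e(1)] by force
  then show ?thesis unfolding EE_def atomic_edges_def atoms_def by blast
qed

lemma atomic_edges_EE:
  assumes G: "pdCG p \<tau> G"
  shows "atomic_edges G = {e \<in> edges G. tau_e \<tau> e = e \<or> tau_e \<tau> e \<notin> edges G \<or>
    e \<in> EE p \<tau> G \<or> tau_e \<tau> e \<in> EE p \<tau> G}"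
proof -
  have sub: "atomic_edges G \<subseteq> edges G"
    and closed: "\<And>e. e \<in> atomic_edges G \<Longrightarrow> tau_e \<tau> e \<in> edges G \<Longrightarrow> tau_e \<tau> e \<in> atomic_edges G"
    and lonely: "\<And>e. e \<in> edges G \<Longrightarrow> tau_e \<tau> e = e \<or> tau_e \<tau> e \<notin> edges G \<Longrightarrow> e \<in> atomic_edges G"
    using admissible_atomic_edges[OF G] unfolding admissible_atoms_def by blast+
  have "e \<in> atomic_edges G \<longleftrightarrow> e \<in> EE p \<tau> G \<or> tau_e \<tau> e \<in> EE p \<tau> G"
    if e: "e \<in> edges G" "tau_e \<tau> e \<noteq> e" "tau_e \<tau> e \<in> edges G" for e
  proof -
    have "e \<in> F_V p" using e(1) edges_subset_F_V[OF G] by blast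
    then have "e \<in> F_L p \<tau> \<or> tau_e \<tau> e \<in> F_L p \<tau>" using F_L_or_tau_e_F_L e(2) by blast
    then show ?thesis
      using e closed[of e] closed[of "tau_e \<tau> e"] tau_e_tau_e_edges[OF G e(1)] unfolding EE_eq[OF G]
      by auto
  qed
  then show ?thesis using sub lonely by blast
qed

lemma pdCG_eq_quadI:
  assumes "pdCG p \<tau> F" "pdCG p \<tau> H" "quad p q \<tau> F = quad p q \<tau> H"
  shows "F = H"
proof -
  have "edges F = edges H" "LL q F = LL q H" "EE p \<tau> F = EE p \<tau> H"
    using assms(3) by (simp_all add: quad_def)
  then show ?thesis
    using pdCG_eqI[OF assms(1,2)] atomic_vertices_LL[OF assms(1)] atomic_vertices_LL[OF assms(2)]
      atomic_edges_EE[OF assms(1)] atomic_edges_EE[OF assms(2)] by simp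
qed

lemma twin_le_not_model_le:
  assumes H1: "pdCG p \<tau> H1" and H2: "pdCG p \<tau> H2"
    and le: "twin_le p q \<tau> H1 H2" and not_le: "\<not> model_le H1 H2"
  obtains e where "e \<in> atomic_edges H1" "e \<in> edges H2" "e \<notin> atomic_edges H2"
    "tau_e \<tau> e \<in> edges H2" "tau_e \<tau> e \<notin> edges H1"
proof -
  have E: "edges H1 \<subseteq> edges H2" and EE: "EE p \<tau> H1 \<subseteq> EE p \<tau> H2"
    using le by (simp_all add: twin_le_def)
  have "atomic_vertices H1 \<subseteq> atomic_vertices H2"
    using le unfolding twin_le_def atomic_vertices_LL[OF H1] atomic_vertices_LL[OF H2] by blast
  then obtain e where e: "e \<in> atomic_edges H1" "e \<notin> atomic_edges H2"
    using not_le E model_le_iff[OF H1 H2] by blast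
  then have "e \<in> edges H2" using E atomic_edges_EE[OF H1] by blast
  then have "tau_e \<tau> e \<in> edges H2" "tau_e \<tau> e \<notin> edges H1"
    using e EE atomic_edges_EE[OF H1] atomic_edges_EE[OF H2] by blast+
  then show thesis using that e \<open>e \<in> edges H2\<close> by blast
qed

lemma covered_s_model_le_eq:
  assumes "covered_s p \<tau> H1 G" "covered_s p \<tau> H2 G" "model_le H1 H2"
  shows "H1 = H2"
  using assms unfolding covered_s_def model_less_def by blast

lemma twin_config_intro:
  assumes G: "pdCG p \<tau> G" and H1: "pdCG p \<tau> H1" and H2: "pdCG p \<tau> H2"
    and x: "x \<in> atomic_edges G" "tau_e \<tau> x \<in> atomic_edges G" "tau_e \<tau> x \<noteq> x"
    and H1_eq: "atomic_vertices H1 = atomic_vertices G" "edges H1 = edges G - {tau_e \<tau> x}"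
      "atomic_edges H1 = atomic_edges G - {tau_e \<tau> x}"
    and H2_eq: "atomic_vertices H2 = atomic_vertices G" "edges H2 = edges G"
      "atomic_edges H2 = atomic_edges G - {x, tau_e \<tau> x}"
  shows "twin_config p q \<tau> G H1 H2"
proof -
  have xE: "x \<in> edges G" "tau_e \<tau> x \<in> edges G"
    using x admissible_atomic_edges[OF G] by (auto simp: admissible_atoms_def)
  note inv = tau_e_tau_e_edges[OF G]
  obtain f where f: "f \<in> F_L p \<tau>" "{f, tau_e \<tau> f} = {x, tau_e \<tau> x}"
  proof -
    have "x \<in> F_L p \<tau> \<or> tau_e \<tau> x \<in> F_L p \<tau>"
      using F_L_or_tau_e_F_L x(3) xE(1) edges_subset_F_V[OF G] by blast
    then show thesis using that inv[OF xE(1)] by (metis insert_commute)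
  qed
  have fEE: "f \<in> EE p \<tau> G" and "tau_e \<tau> f \<notin> EE p \<tau> G"
    using f x xE tau_e_not_F_L[OF f(1)] unfolding EE_eq[OF G] doubleton_eq_iff by auto
  then have EE_f: "EE p \<tau> G - {x, tau_e \<tau> x} = EE p \<tau> G - {f}" using f(2) by auto
  have "EE p \<tau> H2 = EE p \<tau> G - {x, tau_e \<tau> x}"
    unfolding EE_eq[OF H2] EE_eq[OF G] H2_eq by auto
  then have q2: "quad p q \<tau> H2 = (edges G, LL q G, EE p \<tau> G - {f})"
    using H2_eq EE_f by (simp add: quad_def LL_eq)
  have "tau_e \<tau> e = tau_e \<tau> x \<longleftrightarrow> e = x" if "e \<in> edges G" for e
    using inv[OF that] inv[OF xE(1)] by metis
  then have "EE p \<tau> H1 = EE p \<tau> G - {x, tau_e \<tau> x}"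
    unfolding EE_eq[OF H1] EE_eq[OF G] H1_eq by auto
  then have q1: "quad p q \<tau> H1 = (edges G - {tau_e \<tau> x}, LL q G, EE p \<tau> G - {f})"
    using H1_eq EE_f by (simp add: quad_def LL_eq)
  have "tau_e \<tau> x \<in> {f, tau_e \<tau> f}" using f(2) by simp
  then have "quad p q \<tau> H1 = (edges G - {f}, LL q G, EE p \<tau> G - {f}) \<or>
      quad p q \<tau> H1 = (edges G - {tau_e \<tau> f}, LL q G, EE p \<tau> G - {f})"
    using q1 by auto
  then show ?thesis unfolding twin_config_def using fEE q2 by blast
qed

lemma twin_le_covers_imp_twin_config:
  assumes c1: "covered_s p \<tau> H1 G" and c2: "covered_s p \<tau> H2 G" and ne: "H1 \<noteq> H2"
    and le: "twin_le p q \<tau> H1 H2"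
  shows "twin_config p q \<tau> G H1 H2"
proof -
  note H1 = covered_s_D(1)[OF c1] and H2 = covered_s_D(1)[OF c2] and G = covered_s_D(2)[OF c1]
  have "\<not> model_le H1 H2" using covered_s_model_le_eq[OF c1 c2] ne by blast
  then obtain e where e: "e \<in> atomic_edges H1" "e \<in> edges H2" "e \<notin> atomic_edges H2"
    "tau_e \<tau> e \<in> edges H2" "tau_e \<tau> e \<notin> edges H1"
    by (rule twin_le_not_model_le[OF H1 H2 le])
  have eG: "e \<in> atomic_edges G" using e(1) covered_s_D(5)[OF c1] by blast
  note twins = covered_s_merge_atomic_twins[OF c2 eG e(3) e(2)]
  have "atomic_vertices H1 = atomic_vertices G \<and> edges H1 = edges G - {tau_e \<tau> e} \<and>
      atomic_edges H1 = atomic_edges G - {tau_e \<tau> e}"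
    using covered_s_delete_atomic_edge[OF c1 twins(1) e(5)] .
  then show ?thesis using twin_config_intro[OF G H1 H2 eG twins(1,2)] twins(3) by blast
qed

lemma twin_config_imp_twin_le: "twin_config p q \<tau> G H1 H2 \<Longrightarrow> twin_le p q \<tau> H1 H2"
  unfolding twin_config_def twin_le_def quad_def by auto

lemma twin_config_imp_covered_t:
  assumes H1: "pdCG p \<tau> H1" and H2: "pdCG p \<tau> H2" and ne: "H1 \<noteq> H2"
    and cfg: "twin_config p q \<tau> G H1 H2"
  shows "covered_t p q \<tau> H1 H2"
proof -
  obtain e z where q2: "quad p q \<tau> H2 = (edges G, LL q G, EE p \<tau> G - {e})"
    and q1: "quad p q \<tau> H1 = (edges G - {z}, LL q G, EE p \<tau> G - {e})"
    using cfg unfolding twin_config_def by blast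
  have "F = H1 \<or> F = H2" if F: "pdCG p \<tau> F" "twin_le p q \<tau> H1 F" "twin_le p q \<tau> F H2" for F
  proof -
    have "edges G - {z} \<subseteq> edges F" "edges F \<subseteq> edges G"
      and "LL q F = LL q G" "EE p \<tau> F = EE p \<tau> G - {e}"
      using F(2,3) q1 q2 unfolding twin_le_def quad_def by auto
    then have "quad p q \<tau> F = quad p q \<tau> H1 \<or> quad p q \<tau> F = quad p q \<tau> H2"
      using q1 q2 by (cases "z \<in> edges F") (auto simp: quad_def)
    then show ?thesis using pdCG_eq_quadI[OF F(1) H1] pdCG_eq_quadI[OF F(1) H2] by blast
  qed
  then show ?thesis
    using H1 H2 ne twin_config_imp_twin_le[OF cfg] by (auto simp: covered_t_def twin_less_def)
qed

end

theorem corollary9: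
  fixes p q :: nat and \<tau> :: "nat \<Rightarrow> nat" and G H1 H2 :: cgraph
  assumes "twin_pairing p \<tau>"
    and "\<tau> ` {1..q} = {q+1..p}"
    and "pdCG p \<tau> G" and "pdCG p \<tau> H1" and "pdCG p \<tau> H2"
    and "covered_s p \<tau> H1 G" and "covered_s p \<tau> H2 G"
    and "H1 \<noteq> H2"
  shows "(twin_le p q \<tau> H1 H2 \<longleftrightarrow> twin_config p q \<tau> G H1 H2)
     \<and> (twin_config p q \<tau> G H1 H2 \<longrightarrow> covered_t p q \<tau> H1 H2)
     \<and> (\<not> twin_config p q \<tau> G H1 H2 \<and> \<not> twin_config p q \<tau> G H2 H1 \<longrightarrow>
          \<not> twin_le p q \<tau> H1 H2 \<and> \<not> twin_le p q \<tau> H2 H1)"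
proof -
  interpret paired_data p q \<tau> using assms(1,2) by unfold_locales
  have "twin_le p q \<tau> H1 H2 \<Longrightarrow> twin_config p q \<tau> G H1 H2"
    using twin_le_covers_imp_twin_config[OF assms(6,7,8)] .
  moreover have "twin_le p q \<tau> H2 H1 \<Longrightarrow> twin_config p q \<tau> G H2 H1"
    using twin_le_covers_imp_twin_config[OF assms(7,6)] assms(8) by metis
  ultimately show ?thesis
    using twin_config_imp_twin_le twin_config_imp_covered_t[OF assms(4,5,8)] by blast
qed

end
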